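(* The function $F(x)=\beta_{i_1(x),1}+\sum_{k=2}^{\infty}\Big[\tilde\beta_{i_k(x),k}\prod_{j=1}^{k-1}\tilde p_{i_j(x),j}\Big]$, $x=\Delta^{-\tilde Q}_{i_1(x)i_2(x)\dots}$, is continuous at every point of $[0,1]$.
   Context: Let $(m_n)_{n\ge1}$ be finite nonnegative integers and $\tilde Q=\|q_{i,n}\|$ ($i\in\{0,\dots,m_n\}$) with $q_{i,n}>0$, $\sum_{i}q_{i,n}=1$ for all $n$, and $\prod_n q_{i_n,n}=0$ for every digit sequence $(i_n)$. Put $a_{0,n}=0$, $a_{i,n}=\sum_{l<i}q_{l,n}$; $\Delta^{\tilde Q}_{j_1j_2\dots}=a_{j_1,1}+\sum_{n\ge2}a_{j_n,n}\prod_{l<n}q_{j_l,l}$. For odd $n$: $\tilde q_{i,n}=q_{i,n}$, $\tilde a_{i,n}=a_{i,n}$; for even $n$: $\tilde q_{i,n}=q_{m_n-i,n}$, $\tilde a_{i,n}=a_{m_n-i,n}$. The nega-$\tilde Q$-representation $x=\Delta^{-\tilde Q}_{i_1i_2\dots}$ means $x=\Delta^{\tilde Q}_{i_1[m_2-i_2]i_3[m_4-i_4]\dots}$; every $x\in[0,1]$ has one, and numbers $\Delta^{-\tilde Q}_{i_1\dots i_nm_{n+1}0m_{n+3}0\dots}=\Delta^{-\tilde Q}_{i_1\dots[i_n-1]0m_{n+2}0m_{n+4}\dots}$ ($i_n\ne0$) have two (the value of $F$ is the same for both). Let $P=\|p_{i,n}\|$ have the same shape with $p_{i,n}\in(-1,1)$,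 $\sum_ip_{i,n}=1$, $\prod_n|p_{i_n,n}|=0$ for every digit sequence, $0<\sum_{i<c}p_{i,n}<1$ for $c\in\{1,\dots,m_n\}$. Put $\beta_{0,n}=0$, $\beta_{c,n}=\sum_{i<c}p_{i,n}$; for odd $n$: $\tilde p_{i,n}=p_{i,n}$, $\tilde\beta_{i,n}=\beta_{i,n}$; for even $n$: $\tilde p_{i,n}=p_{m_n-i,n}$, $\tilde\beta_{i,n}=\beta_{m_n-i,n}$. *)

theory Defs
  imports "HOL-Analysis.Analysis"
begin

(* Conventions: positions n are indexed from 1 (index 0 is ignored);
   m n = m_n, q i n = q_{i,n}, p i n = p_{i,n}, digit sequences d :: nat => nat. *)

definition avals :: "(nat \<Rightarrow> nat \<Rightarrow> real) \<Rightarrow> nat \<Rightarrow> nat \<Rightarrow> real" where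
  "avals q i n = (\<Sum>l<i. q l n)"

definition DeltaQ :: "(nat \<Rightarrow> nat \<Rightarrow> real) \<Rightarrow> (nat \<Rightarrow> nat) \<Rightarrow> real" where
  "DeltaQ q j = avals q (j 1) 1
     + (\<Sum>k. avals q (j (k+2)) (k+2) * (\<Prod>l\<in>{1..k+1}. q (j l) l))"

definition valid_digits :: "(nat \<Rightarrow> nat) \<Rightarrow> (nat \<Rightarrow> nat) \<Rightarrow> bool" where
  "valid_digits m d \<longleftrightarrow> (\<forall>n\<ge>1. d n \<le> m n)"

definition tidx :: "(nat \<Rightarrow> nat) \<Rightarrow> nat \<Rightarrow> nat \<Rightarrow> nat" where
  "tidx m i n = (if odd n then i else m n - i)"

definition nega_rep :: "(nat \<Rightarrow> nat) \<Rightarrow> (nat \<Rightarrow> nat \<Rightarrow> real) \<Rightarrow> real \<Rightarrow> (nat \<Rightarrow> nat) \<Rightarrow> bool" where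
  "nega_rep m q x d \<longleftrightarrow> valid_digits m d \<and> x = DeltaQ q (\<lambda>n. tidx m (d n) n)"

definition Fdig :: "(nat \<Rightarrow> nat) \<Rightarrow> (nat \<Rightarrow> nat \<Rightarrow> real) \<Rightarrow> (nat \<Rightarrow> nat) \<Rightarrow> real" where
  "Fdig m p d = avals p (d 1) 1
     + (\<Sum>k. avals p (tidx m (d (k+2)) (k+2)) (k+2)
             * (\<Prod>j\<in>{1..k+1}. p (tidx m (d j) j) j))"

definition Ffun :: "(nat \<Rightarrow> nat) \<Rightarrow> (nat \<Rightarrow> nat \<Rightarrow> real) \<Rightarrow> (nat \<Rightarrow> nat \<Rightarrow> real) \<Rightarrow> real \<Rightarrow> real" where
  "Ffun m q p x = Fdig m p (SOME d. nega_rep m q x d)"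

end

theory Submission
  imports Defs
begin

text \<open>
  Reflecting the digits at even positions turns a nega-\<open>\<tilde>Q\<close>-representation of \<open>x\<close> into an
  ordinary \<open>Q\<close>-representation \<open>c\<close>, and then \<open>F(x) = \<Delta>\<^sup>P c\<close>. Both \<open>\<Delta>\<^sup>Q\<close> and \<open>\<Delta>\<^sup>P\<close> are
  continuous on the compact digit space \<open>\<Prod>\<^sub>n {0..m\<^sub>n}\<close>, because the tail after \<open>N\<close> digits
  moves the value by at most the length of the rank-\<open>N\<close> cylinder, which tends to \<open>0\<close>.
  \<open>\<Delta>\<^sup>Q\<close> maps the digit space onto \<open>[0,1]\<close> (greedy digits), and since all \<open>q\<^sub>i\<^sub>,\<^sub>n > 0\<close> it
  identifies two digit sequences only if they have the form \<open>(\<dots>, i, m, m, \<dots>)\<close> and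
  \<open>(\<dots>, i+1, 0, 0, \<dots>)\<close>, which \<open>\<Delta>\<^sup>P\<close> identifies as well. Hence the graph of \<open>F\<close> is the
  continuous image \<open>c \<mapsto> (\<Delta>\<^sup>Q c, \<Delta>\<^sup>P c)\<close> of a compact set, so it is closed, and \<open>F\<close> takes
  values in the compact set \<open>[0,1]\<close>; a function with these two properties is continuous.
\<close>

text \<open>\<open>cyl_base w c N\<close> and \<open>cyl_len w c N\<close> are the left endpoint and the length of the rank-\<open>N\<close>
  cylinder \<open>\<Delta>\<^sup>w\<^sub>c\<^sub>1\<^sub>\<dots>\<^sub>c\<^sub>N\<close>.\<close>

definition cyl_base :: "(nat \<Rightarrow> nat \<Rightarrow> real) \<Rightarrow> (nat \<Rightarrow> nat) \<Rightarrow> nat \<Rightarrow> real" where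
  "cyl_base w c N = (\<Sum>k\<in>{1..N}. avals w (c k) k * (\<Prod>l\<in>{1..<k}. w (c l) l))"

definition cyl_len :: "(nat \<Rightarrow> nat \<Rightarrow> real) \<Rightarrow> (nat \<Rightarrow> nat) \<Rightarrow> nat \<Rightarrow> real" where
  "cyl_len w c N = (\<Prod>l\<in>{1..N}. w (c l) l)"

lemma cyl_base_0 [simp]: "cyl_base w c 0 = 0"
  by (simp add: cyl_base_def)

lemma cyl_len_0 [simp]: "cyl_len w c 0 = 1"
  by (simp add: cyl_len_def)

lemma cyl_len_Suc: "cyl_len w c (Suc N) = cyl_len w c N * w (c (Suc N)) (Suc N)"
  by (simp add: cyl_len_def prod.cl_ivl_Suc)

lemma cyl_base_Suc:
  "cyl_base w c (Suc N) = cyl_base w c N + avals w (c (Suc N)) (Suc N) * cyl_len w c N"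
  by (simp add: cyl_base_def cyl_len_def sum.cl_ivl_Suc atLeastLessThanSuc_atLeastAtMost)

lemma avals_0 [simp]: "avals w 0 n = 0"
  by (simp add: avals_def)

lemma avals_Suc: "avals w (Suc i) n = avals w i n + w i n"
  by (simp add: avals_def)

lemma cyl_end_Suc:
  "cyl_base w c (Suc N) + cyl_len w c (Suc N)
     = cyl_base w c N + avals w (Suc (c (Suc N))) (Suc N) * cyl_len w c N"
  by (simp add: cyl_base_Suc cyl_len_Suc avals_Suc algebra_simps)

lemma cyl_base_cong: "(\<And>n. n \<in> {1..N} \<Longrightarrow> c n = c' n) \<Longrightarrow> cyl_base w c N = cyl_base w c' N"
  unfolding cyl_base_def by (intro sum.cong refl) (auto intro!: prod.cong)

lemma cyl_len_cong: "(\<And>n. n \<in> {1..N} \<Longrightarrow> c n = c' n) \<Longrightarrow> cyl_len w c N = cyl_len w c' N"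
  unfolding cyl_len_def by (auto intro!: prod.cong)

lemma DeltaQ_cong: "(\<And>n. n \<ge> 1 \<Longrightarrow> c n = c' n) \<Longrightarrow> DeltaQ w c = DeltaQ w c'"
  unfolding DeltaQ_def by (auto intro!: arg_cong2[where f = "(+)"] suminf_cong prod.cong)

lemma DeltaQ_eq_limit:
  assumes "cyl_base w c \<longlonglongrightarrow> L"
  shows "DeltaQ w c = L"
proof -
  define f where "f k = avals w (c (k+2)) (k+2) * (\<Prod>l\<in>{1..k+1}. w (c l) l)" for k
  have "f k = cyl_base w c (Suc (Suc k)) - cyl_base w c (Suc k)" for k
    by (simp add: f_def cyl_base_Suc cyl_len_def)
  then have "(\<lambda>n. \<Sum>k<n. f k) = (\<lambda>n. cyl_base w c (Suc n) - cyl_base w c 1)"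
    by (simp add: sum_lessThan_telescope[of "\<lambda>i. cyl_base w c (Suc i)"])
  moreover have "(\<lambda>n. cyl_base w c (Suc n) - cyl_base w c 1) \<longlonglongrightarrow> L - cyl_base w c 1"
    using assms by (intro tendsto_diff tendsto_const) (simp add: LIMSEQ_Suc)
  ultimately have "f sums (L - cyl_base w c 1)"
    by (simp add: sums_def)
  then show ?thesis
    unfolding DeltaQ_def f_def[symmetric] by (simp add: sums_iff cyl_base_Suc)
qed

lemma convex_combination_between:
  fixes S P a :: real
  assumes "0 \<le> a" "a \<le> 1"
  shows "min S (S + P) \<le> S + a * P \<and> S + a * P \<le> max S (S + P)"
  using assms mult_left_le_one_le[of P a] mult_left_le_one_le[of "- P" a]
  by (cases "P \<ge> 0") (auto simp: mult_nonneg_nonpos)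

definition digit_space :: "(nat \<Rightarrow> nat) \<Rightarrow> (nat \<Rightarrow> nat) set" where
  "digit_space m = {c. \<forall>n. c n \<le> m n}"

lemma digit_space_valid_digits: "c \<in> digit_space m \<Longrightarrow> valid_digits m c"
  by (simp add: digit_space_def valid_digits_def)

lemma compact_digit_space: "compact (digit_space m)"
proof -
  have "digit_space m = PiE UNIV (\<lambda>n. {..m n})"
    by (auto simp: digit_space_def PiE_UNIV_domain Pi_iff)
  moreover have "compactin (product_topology (\<lambda>n. euclidean) UNIV) (PiE UNIV (\<lambda>n. {..m n}))"
    by (simp add: compactin_PiE finite_imp_compact)
  ultimately show ?thesis
    by (simp add: euclidean_product_topology)
qed

locale digit_weights =
  fixes m :: "nat \<Rightarrow> nat" and w :: "nat \<Rightarrow> nat \<Rightarrow> real"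
  assumes weights_sum: "\<And>n. n \<ge> 1 \<Longrightarrow> (\<Sum>i\<le>m n. w i n) = 1"
    and avals_between: "\<And>n c. n \<ge> 1 \<Longrightarrow> c \<le> Suc (m n) \<Longrightarrow> 0 \<le> avals w c n \<and> avals w c n \<le> 1"
    and cyl_len_tendsto_0: "\<And>c. valid_digits m c \<Longrightarrow> cyl_len w c \<longlonglongrightarrow> 0"
begin

text \<open>For signed weights the cylinder length may be negative, so its endpoints are ordered by
  \<open>min\<close>/\<open>max\<close>.\<close>

definition cyl_lo :: "(nat \<Rightarrow> nat) \<Rightarrow> nat \<Rightarrow> real" where
  "cyl_lo c N = min (cyl_base w c N) (cyl_base w c N + cyl_len w c N)"

definition cyl_hi :: "(nat \<Rightarrow> nat) \<Rightarrow> nat \<Rightarrow> real" where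
  "cyl_hi c N = max (cyl_base w c N) (cyl_base w c N + cyl_len w c N)"

lemma avals_top: "n \<ge> 1 \<Longrightarrow> avals w (Suc (m n)) n = 1"
  using weights_sum by (simp add: avals_def lessThan_Suc_atMost)

lemma cyl_hi_minus_lo: "cyl_hi c N - cyl_lo c N = \<bar>cyl_len w c N\<bar>"
  by (simp add: cyl_hi_def cyl_lo_def)

lemma cyl_lo_le_hi: "cyl_lo c N \<le> cyl_hi c N"
  by (simp add: cyl_lo_def cyl_hi_def)

lemma cyl_nested:
  assumes "valid_digits m c"
  shows "cyl_lo c N \<le> cyl_lo c (Suc N) \<and> cyl_hi c (Suc N) \<le> cyl_hi c N"
proof -
  let ?a = "\<lambda>i. avals w i (Suc N)"
  have "c (Suc N) \<le> m (Suc N)"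
    using assms by (simp add: valid_digits_def)
  then have "0 \<le> ?a (c (Suc N)) \<and> ?a (c (Suc N)) \<le> 1"
    and "0 \<le> ?a (Suc (c (Suc N))) \<and> ?a (Suc (c (Suc N))) \<le> 1"
    using avals_between[of "Suc N"] by auto
  then have "cyl_lo c N \<le> cyl_base w c (Suc N) \<and> cyl_base w c (Suc N) \<le> cyl_hi c N"
    and "cyl_lo c N \<le> cyl_base w c (Suc N) + cyl_len w c (Suc N)
         \<and> cyl_base w c (Suc N) + cyl_len w c (Suc N) \<le> cyl_hi c N"
    using convex_combination_between[of _ "cyl_base w c N" "cyl_len w c N"]
    by (simp add: cyl_lo_def cyl_hi_def cyl_base_Suc, simp add: cyl_lo_def cyl_hi_def cyl_end_Suc)
  then show ?thesis
    by (simp add: cyl_lo_def[of c "Suc N"] cyl_hi_def[of c "Suc N"])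
qed

lemma incseq_cyl_lo: "valid_digits m c \<Longrightarrow> incseq (cyl_lo c)"
  using cyl_nested by (simp add: incseq_SucI)

lemma decseq_cyl_hi: "valid_digits m c \<Longrightarrow> decseq (cyl_hi c)"
  using cyl_nested by (simp add: decseq_SucI)

lemma cyl_base_tendsto_DeltaQ:
  assumes c: "valid_digits m c"
  shows "cyl_base w c \<longlonglongrightarrow> DeltaQ w c"
proof -
  have "cyl_lo c i \<le> cyl_hi c 0" for i
    using cyl_lo_le_hi decseqD[OF decseq_cyl_hi[OF c], of 0 i] by (meson order_trans zero_le)
  then obtain L where lo: "cyl_lo c \<longlonglongrightarrow> L"
    using incseq_convergent[OF incseq_cyl_lo[OF c]] by blast
  have "(\<lambda>N. cyl_lo c N + \<bar>cyl_len w c N\<bar>) \<longlonglongrightarrow> L + 0"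
    using cyl_len_tendsto_0[OF c] by (intro tendsto_add lo tendsto_rabs_zero)
  moreover have "(\<lambda>N. cyl_lo c N + \<bar>cyl_len w c N\<bar>) = cyl_hi c"
    using cyl_hi_minus_lo[of c] by (auto simp: algebra_simps)
  ultimately have hi: "cyl_hi c \<longlonglongrightarrow> L"
    by simp
  have "cyl_base w c \<longlonglongrightarrow> L"
    by (rule tendsto_sandwich[OF _ _ lo hi]) (simp_all add: cyl_lo_def cyl_hi_def)
  with DeltaQ_eq_limit show ?thesis
    by metis
qed

lemma DeltaQ_in_cyl:
  assumes c: "valid_digits m c"
  shows "cyl_lo c N \<le> DeltaQ w c \<and> DeltaQ w c \<le> cyl_hi c N"
proof -
  have base: "cyl_base w c \<longlonglongrightarrow> DeltaQ w c"
    by (rule cyl_base_tendsto_DeltaQ[OF c])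
  moreover have "(\<lambda>N. cyl_base w c N + cyl_len w c N) \<longlonglongrightarrow> DeltaQ w c + 0"
    using base cyl_len_tendsto_0[OF c] by (rule tendsto_add)
  ultimately have "cyl_lo c \<longlonglongrightarrow> DeltaQ w c" "cyl_hi c \<longlonglongrightarrow> DeltaQ w c"
    unfolding cyl_lo_def[abs_def] cyl_hi_def[abs_def]
    using tendsto_min tendsto_max by fastforce+
  then show ?thesis
    using incseq_le[OF incseq_cyl_lo[OF c]] decseq_ge[OF decseq_cyl_hi[OF c]] by blast
qed

lemma DeltaQ_bounds: "valid_digits m c \<Longrightarrow> 0 \<le> DeltaQ w c \<and> DeltaQ w c \<le> 1"
  using DeltaQ_in_cyl[of c 0] by (simp add: cyl_lo_def cyl_hi_def)

lemma DeltaQ_diff_le_cyl_len: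
  assumes "valid_digits m c" "valid_digits m c'" "\<And>n. n \<in> {1..N} \<Longrightarrow> c n = c' n"
  shows "\<bar>DeltaQ w c - DeltaQ w c'\<bar> \<le> \<bar>cyl_len w c N\<bar>"
proof -
  have "cyl_lo c N = cyl_lo c' N" "cyl_hi c N = cyl_hi c' N"
    using cyl_base_cong[OF assms(3)] cyl_len_cong[OF assms(3)] by (auto simp: cyl_lo_def cyl_hi_def)
  then show ?thesis
    using DeltaQ_in_cyl[OF assms(1), of N] DeltaQ_in_cyl[OF assms(2), of N] cyl_hi_minus_lo[of c N]
    by linarith
qed

lemma DeltaQ_tendsto:
  assumes u: "\<And>k. valid_digits m (u k)" and a: "valid_digits m a"
    and ev: "\<And>n. eventually (\<lambda>k. u k n = a n) sequentially"
  shows "(\<lambda>k. DeltaQ w (u k)) \<longlonglongrightarrow> DeltaQ w a"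
proof (rule tendstoI)
  fix e :: real
  assume "e > 0"
  then obtain N where N: "\<bar>cyl_len w a N\<bar> < e"
    using LIMSEQ_D[OF cyl_len_tendsto_0[OF a]] by fastforce
  have "eventually (\<lambda>k. \<forall>n\<in>{1..N}. u k n = a n) sequentially"
    using ev by (simp add: eventually_ball_finite)
  then show "eventually (\<lambda>k. dist (DeltaQ w (u k)) (DeltaQ w a) < e) sequentially"
  proof (rule eventually_mono)
    fix k
    assume "\<forall>n\<in>{1..N}. u k n = a n"
    then have "\<bar>DeltaQ w a - DeltaQ w (u k)\<bar> \<le> \<bar>cyl_len w a N\<bar>"
      using DeltaQ_diff_le_cyl_len[OF a u[of k]] by auto
    with N show "dist (DeltaQ w (u k)) (DeltaQ w a) < e"
      by (simp add: dist_real_def abs_minus_commute)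
  qed
qed

lemma continuous_on_DeltaQ: "continuous_on (digit_space m) (DeltaQ w)"
  unfolding continuous_on_def
proof
  fix a
  assume a: "a \<in> digit_space m"
  show "(DeltaQ w \<longlongrightarrow> DeltaQ w a) (at a within digit_space m)"
    unfolding tendsto_at_iff_sequentially comp_def
  proof (intro allI impI)
    fix u :: "nat \<Rightarrow> nat \<Rightarrow> nat"
    assume u: "\<forall>i. u i \<in> digit_space m - {a}" and lim: "u \<longlonglongrightarrow> a"
    show "(\<lambda>k. DeltaQ w (u k)) \<longlonglongrightarrow> DeltaQ w a"
    proof (rule DeltaQ_tendsto)
      show "valid_digits m (u k)" for k
        using u by (simp add: digit_space_valid_digits)
      show "valid_digits m a"
        using a by (rule digit_space_valid_digits)
      fix n
      have "(\<lambda>k. u k n) \<longlonglongrightarrow> a n"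
        by (rule continuous_on_tendsto_compose[OF continuous_on_product_coordinates lim]) auto
      then have "eventually (\<lambda>k. u k n \<in> {a n}) sequentially"
        by (rule topological_tendstoD) (auto intro: open_discrete)
      then show "eventually (\<lambda>k. u k n = a n) sequentially"
        by simp
    qed
  qed
qed

lemma DeltaQ_zero_tail:
  assumes c: "valid_digits m c" and tail: "\<And>k. k > n \<Longrightarrow> c k = 0"
  shows "DeltaQ w c = cyl_base w c n"
proof (rule DeltaQ_eq_limit, rule tendsto_eventually)
  have "cyl_base w c N = cyl_base w c n" if "n \<le> N" for N
    using that
  proof (induction N rule: dec_induct)
    case (step k)
    then have "c (Suc k) = 0"
      by (simp add: tail)
    with step.IH show ?case
      by (simp add: cyl_base_Suc)
  qed simp
  then show "eventually (\<lambda>N. cyl_base w c N = cyl_base w c n) sequentially"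
    by (rule eventually_sequentiallyI)
qed

lemma DeltaQ_max_tail:
  assumes c: "valid_digits m c" and tail: "\<And>k. k > n \<Longrightarrow> c k = m k"
  shows "DeltaQ w c = cyl_base w c n + cyl_len w c n"
proof (rule DeltaQ_eq_limit)
  let ?K = "cyl_base w c n + cyl_len w c n"
  have end_const: "cyl_base w c N + cyl_len w c N = ?K" if "n \<le> N" for N
    using that
  proof (induction N rule: dec_induct)
    case (step k)
    then have "c (Suc k) = m (Suc k)"
      by (simp add: tail)
    with step.IH show ?case
      by (simp add: cyl_end_Suc avals_top)
  qed simp
  have "eventually (\<lambda>N. ?K - cyl_len w c N = cyl_base w c N) sequentially"
  proof (rule eventually_sequentiallyI)
    fix N
    assume "n \<le> N"
    from end_const[OF this] show "?K - cyl_len w c N = cyl_base w c N"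
      by linarith
  qed
  moreover have "(\<lambda>N. ?K - cyl_len w c N) \<longlonglongrightarrow> ?K - 0"
    using cyl_len_tendsto_0[OF c] by (intro tendsto_diff tendsto_const)
  ultimately show "cyl_base w c \<longlonglongrightarrow> ?K"
    using Lim_transform_eventually by fastforce
qed

lemma DeltaQ_eq_adjacent:
  assumes c: "valid_digits m c" and c': "valid_digits m c'" and n: "n \<ge> 1"
    and agree: "\<And>k. 1 \<le> k \<Longrightarrow> k < n \<Longrightarrow> c k = c' k" and next_digit: "c' n = Suc (c n)"
    and max_tail: "\<And>k. k > n \<Longrightarrow> c k = m k" and zero_tail: "\<And>k. k > n \<Longrightarrow> c' k = 0"
  shows "DeltaQ w c = DeltaQ w c'"
proof -
  obtain n0 where n0: "n = Suc n0"
    using n by (cases n) auto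
  have base: "cyl_base w c n0 = cyl_base w c' n0" and len: "cyl_len w c n0 = cyl_len w c' n0"
    using agree n0 by (auto intro!: cyl_base_cong cyl_len_cong)
  have "DeltaQ w c = cyl_base w c n + cyl_len w c n"
    by (rule DeltaQ_max_tail[OF c max_tail])
  also have "\<dots> = cyl_base w c' n"
    using cyl_end_Suc[of w c n0] cyl_base_Suc[of w c' n0] n0 base len next_digit by simp
  also have "\<dots> = DeltaQ w c'"
    by (rule DeltaQ_zero_tail[OF c' zero_tail, symmetric])
  finally show ?thesis .
qed

end

definition greedy_digit :: "(nat \<Rightarrow> nat) \<Rightarrow> (nat \<Rightarrow> nat \<Rightarrow> real) \<Rightarrow> real \<Rightarrow> nat \<Rightarrow> real \<Rightarrow> real \<Rightarrow> nat" where
  "greedy_digit m w x n L P = (GREATEST i. i \<le> m n \<and> L + P * avals w i n \<le> x)"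

primrec greedy_cyl :: "(nat \<Rightarrow> nat) \<Rightarrow> (nat \<Rightarrow> nat \<Rightarrow> real) \<Rightarrow> real \<Rightarrow> nat \<Rightarrow> real \<times> real" where
  "greedy_cyl m w x 0 = (0, 1)"
| "greedy_cyl m w x (Suc n) =
     (let (L, P) = greedy_cyl m w x n; i = greedy_digit m w x (Suc n) L P
      in (L + P * avals w i (Suc n), P * w i (Suc n)))"

definition greedy_digits :: "(nat \<Rightarrow> nat) \<Rightarrow> (nat \<Rightarrow> nat \<Rightarrow> real) \<Rightarrow> real \<Rightarrow> nat \<Rightarrow> nat" where
  "greedy_digits m w x n =
     (case n of 0 \<Rightarrow> 0 | Suc k \<Rightarrow> case_prod (greedy_digit m w x (Suc k)) (greedy_cyl m w x k))"

context digit_weights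
begin

lemma greedy_step:
  assumes c: "c = greedy_digits m w x"
    and cyl: "greedy_cyl m w x n = (cyl_base w c n, cyl_len w c n)"
    and lo: "cyl_base w c n \<le> x" and hi: "x \<le> cyl_base w c n + cyl_len w c n"
  shows "greedy_cyl m w x (Suc n) = (cyl_base w c (Suc n), cyl_len w c (Suc n))"
    and "cyl_base w c (Suc n) \<le> x" "x \<le> cyl_base w c (Suc n) + cyl_len w c (Suc n)"
    and "c (Suc n) \<le> m (Suc n)"
proof -
  define admissible where
    "admissible i \<longleftrightarrow> i \<le> m (Suc n) \<and> cyl_base w c n + cyl_len w c n * avals w i (Suc n) \<le> x" for i
  have digit: "c (Suc n) = (GREATEST i. admissible i)"
    using cyl by (simp add: c greedy_digits_def greedy_digit_def admissible_def)
  have bounded: "admissible i \<Longrightarrow> i \<le> m (Suc n)" for i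
    by (simp add: admissible_def)
  have "admissible 0"
    using lo by (simp add: admissible_def)
  then have adm: "admissible (c (Suc n))"
    unfolding digit using GreatestI_nat bounded by blast
  have greatest: "i \<le> c (Suc n)" if "admissible i" for i
    unfolding digit using Greatest_le_nat that bounded by blast
  have "greedy_digit m w x (Suc n) (cyl_base w c n) (cyl_len w c n) = c (Suc n)"
    using cyl by (simp add: c greedy_digits_def)
  with cyl show "greedy_cyl m w x (Suc n) = (cyl_base w c (Suc n), cyl_len w c (Suc n))"
    by (simp add: cyl_base_Suc cyl_len_Suc Let_def mult.commute)
  show "cyl_base w c (Suc n) \<le> x" "c (Suc n) \<le> m (Suc n)"
    using adm by (simp_all add: cyl_base_Suc admissible_def mult.commute)
  show "x \<le> cyl_base w c (Suc n) + cyl_len w c (Suc n)"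
  proof (cases "c (Suc n) = m (Suc n)")
    case True
    then show ?thesis
      using hi by (simp add: cyl_end_Suc avals_top)
  next
    case False
    with adm have "\<not> admissible (Suc (c (Suc n)))"
      using greatest by fastforce
    moreover have "Suc (c (Suc n)) \<le> m (Suc n)"
      using adm False by (simp add: admissible_def)
    ultimately show ?thesis
      by (simp add: cyl_end_Suc admissible_def mult.commute)
  qed
qed

lemma greedy_cyl_contains:
  assumes "0 \<le> x" "x \<le> 1"
  shows "greedy_cyl m w x n = (cyl_base w (greedy_digits m w x) n, cyl_len w (greedy_digits m w x) n)
    \<and> cyl_base w (greedy_digits m w x) n \<le> x
    \<and> x \<le> cyl_base w (greedy_digits m w x) n + cyl_len w (greedy_digits m w x) n"
proof (induction n)
  case 0
  then show ?case
    using assms by simp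
next
  case (Suc n)
  then show ?case
    using greedy_step[OF refl] by blast
qed

lemma greedy_digits_in_digit_space:
  assumes "0 \<le> x" "x \<le> 1"
  shows "greedy_digits m w x \<in> digit_space m"
  unfolding digit_space_def
proof (intro CollectI allI)
  fix n
  show "greedy_digits m w x n \<le> m n"
    using greedy_step(4)[OF refl] greedy_cyl_contains[OF assms]
    by (cases n) (simp_all add: greedy_digits_def)
qed

lemma DeltaQ_greedy_digits:
  assumes "0 \<le> x" "x \<le> 1"
  shows "DeltaQ w (greedy_digits m w x) = x"
proof -
  let ?c = "greedy_digits m w x"
  have c: "valid_digits m ?c"
    by (rule digit_space_valid_digits[OF greedy_digits_in_digit_space[OF assms]])
  have "\<bar>x - DeltaQ w ?c\<bar> \<le> \<bar>cyl_len w ?c N\<bar>" for N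
    using DeltaQ_in_cyl[OF c, of N] greedy_cyl_contains[OF assms, of N] cyl_hi_minus_lo[of ?c N]
    unfolding cyl_lo_def cyl_hi_def by auto
  moreover have "(\<lambda>N. \<bar>cyl_len w ?c N\<bar>) \<longlonglongrightarrow> 0"
    using cyl_len_tendsto_0[OF c] by (rule tendsto_rabs_zero)
  ultimately have "\<bar>x - DeltaQ w ?c\<bar> \<le> 0"
    using LIMSEQ_le_const by blast
  then show ?thesis
    by simp
qed

end

locale positive_digit_weights = digit_weights +
  assumes weights_pos: "\<And>n i. n \<ge> 1 \<Longrightarrow> i \<le> m n \<Longrightarrow> w i n > 0"
begin

lemma cyl_len_pos: "valid_digits m c \<Longrightarrow> cyl_len w c N > 0"
  unfolding cyl_len_def by (rule prod_pos) (auto intro!: weights_pos simp: valid_digits_def)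

lemma cyl_lo_eq: "valid_digits m c \<Longrightarrow> cyl_lo c N = cyl_base w c N"
  using cyl_len_pos[of c N] by (simp add: cyl_lo_def)

lemma cyl_hi_eq: "valid_digits m c \<Longrightarrow> cyl_hi c N = cyl_base w c N + cyl_len w c N"
  using cyl_len_pos[of c N] by (simp add: cyl_hi_def)

lemma avals_strict_mono:
  assumes n: "n \<ge> 1" and "i < j" "j \<le> Suc (m n)"
  shows "avals w i n < avals w j n"
  using assms(2-)
proof (induction j rule: less_Suc_induct)
  case (1 k)
  then show ?case
    using weights_pos[OF n, of k] by (simp add: avals_Suc)
next
  case (2 i j k)
  then show ?case
    by fastforce
qed

lemma DeltaQ_at_cyl_end_imp_max_tail:
  assumes c: "valid_digits m c" and D: "DeltaQ w c = cyl_base w c n + cyl_len w c n" and "k > n"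
  shows "c k = m k"
proof (rule ccontr)
  obtain k0 where k0: "k = Suc k0" "n \<le> k0"
    using \<open>k > n\<close> by (cases k) auto
  assume "c k \<noteq> m k"
  moreover have "c k \<le> m k"
    using c k0 by (simp add: valid_digits_def)
  ultimately have "avals w (Suc (c k)) k < avals w (Suc (m k)) k"
    using k0 by (intro avals_strict_mono) auto
  then have "avals w (Suc (c k)) k * cyl_len w c k0 < cyl_len w c k0"
    using cyl_len_pos[OF c, of k0] avals_top[of k] k0 by simp
  then have "cyl_hi c k < cyl_hi c k0"
    using cyl_end_Suc[of w c k0] by (simp add: cyl_hi_eq[OF c] k0)
  also have "cyl_hi c k0 \<le> cyl_hi c n"
    using decseqD[OF decseq_cyl_hi[OF c] \<open>n \<le> k0\<close>] .
  also have "\<dots> = DeltaQ w c"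
    using D by (simp add: cyl_hi_eq[OF c])
  finally show False
    using DeltaQ_in_cyl[OF c, of k] by simp
qed

lemma DeltaQ_at_cyl_base_imp_zero_tail:
  assumes c: "valid_digits m c" and D: "DeltaQ w c = cyl_base w c n" and "k > n"
  shows "c k = 0"
proof (rule ccontr)
  obtain k0 where k0: "k = Suc k0" "n \<le> k0"
    using \<open>k > n\<close> by (cases k) auto
  assume "c k \<noteq> 0"
  moreover have "c k \<le> m k"
    using c k0 by (simp add: valid_digits_def)
  ultimately have "avals w 0 k < avals w (c k) k"
    using k0 by (intro avals_strict_mono) auto
  then have "0 < avals w (c k) k * cyl_len w c k0"
    using cyl_len_pos[OF c, of k0] by simp
  then have "cyl_lo c k0 < cyl_lo c k"
    using cyl_base_Suc[of w c k0] by (simp add: cyl_lo_eq[OF c] k0)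
  moreover have "cyl_lo c n \<le> cyl_lo c k0"
    using incseqD[OF incseq_cyl_lo[OF c] \<open>n \<le> k0\<close>] .
  moreover have "cyl_lo c n = DeltaQ w c"
    using D by (simp add: cyl_lo_eq[OF c])
  ultimately show False
    using DeltaQ_in_cyl[OF c, of k] by simp
qed

lemma DeltaQ_eq_first_difference:
  assumes c: "valid_digits m c" and c': "valid_digits m c'" and n: "n \<ge> 1"
    and agree: "\<And>k. 1 \<le> k \<Longrightarrow> k < n \<Longrightarrow> c k = c' k"
    and less: "c n < c' n" and eq: "DeltaQ w c = DeltaQ w c'"
  shows "c' n = Suc (c n)" "DeltaQ w c = cyl_base w c n + cyl_len w c n" "DeltaQ w c' = cyl_base w c' n"
proof -
  obtain n0 where n0: "n = Suc n0"
    using n by (cases n) auto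
  have base: "cyl_base w c n0 = cyl_base w c' n0" and len: "cyl_len w c n0 = cyl_len w c' n0"
    using agree n0 by (auto intro!: cyl_base_cong cyl_len_cong)
  have upper: "DeltaQ w c \<le> cyl_base w c n0 + avals w (Suc (c n)) n * cyl_len w c n0"
    using DeltaQ_in_cyl[OF c, of n] cyl_end_Suc[of w c n0] n0 by (simp add: cyl_hi_eq[OF c])
  have lower: "cyl_base w c n0 + avals w (c' n) n * cyl_len w c n0 \<le> DeltaQ w c"
    using DeltaQ_in_cyl[OF c', of n] cyl_base_Suc[of w c' n0] n0 eq base len
    by (simp add: cyl_lo_eq[OF c'])
  have "avals w (c' n) n * cyl_len w c n0 \<le> avals w (Suc (c n)) n * cyl_len w c n0"
    using upper lower by linarith
  then have le: "avals w (c' n) n \<le> avals w (Suc (c n)) n"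
    using cyl_len_pos[OF c, of n0] by simp
  show next_digit: "c' n = Suc (c n)"
  proof (rule ccontr)
    assume "c' n \<noteq> Suc (c n)"
    with less have "Suc (c n) < c' n"
      by simp
    moreover have "c' n \<le> m n"
      using c' n by (simp add: valid_digits_def)
    ultimately have "avals w (Suc (c n)) n < avals w (c' n) n"
      by (intro avals_strict_mono[OF n]) auto
    with le show False
      by simp
  qed
  show "DeltaQ w c = cyl_base w c n + cyl_len w c n"
    using upper lower next_digit cyl_end_Suc[of w c n0] n0 DeltaQ_in_cyl[OF c, of n]
    by (simp add: cyl_hi_eq[OF c])
  show "DeltaQ w c' = cyl_base w c' n"
    using upper lower next_digit cyl_base_Suc[of w c' n0] n0 eq base len DeltaQ_in_cyl[OF c', of n]
    by (simp add: cyl_lo_eq[OF c'])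
qed

end

lemma DeltaQ_eq_transfer_first_difference:
  assumes Q: "positive_digit_weights m q" and P: "digit_weights m p"
    and c: "valid_digits m c" and c': "valid_digits m c'" and n: "n \<ge> 1"
    and agree: "\<And>k. 1 \<le> k \<Longrightarrow> k < n \<Longrightarrow> c k = c' k"
    and less: "c n < c' n" and eq: "DeltaQ q c = DeltaQ q c'"
  shows "DeltaQ p c = DeltaQ p c'"
proof (rule digit_weights.DeltaQ_eq_adjacent[OF P c c' n agree])
  interpret Q: positive_digit_weights m q
    by (rule Q)
  show "c' n = Suc (c n)"
    by (rule Q.DeltaQ_eq_first_difference(1)[OF c c' n agree less eq])
  show "c k = m k" if "k > n" for k
    using Q.DeltaQ_at_cyl_end_imp_max_tail[OF c _ that]
      Q.DeltaQ_eq_first_difference(2)[OF c c' n agree less eq] by blast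
  show "c' k = 0" if "k > n" for k
    using Q.DeltaQ_at_cyl_base_imp_zero_tail[OF c' _ that]
      Q.DeltaQ_eq_first_difference(3)[OF c c' n agree less eq] by blast
qed

lemma DeltaQ_eq_transfer:
  assumes Q: "positive_digit_weights m q" and P: "digit_weights m p"
    and c: "valid_digits m c" and c': "valid_digits m c'" and eq: "DeltaQ q c = DeltaQ q c'"
  shows "DeltaQ p c = DeltaQ p c'"
proof (cases "\<forall>n\<ge>1. c n = c' n")
  case True
  then show ?thesis
    by (intro DeltaQ_cong) auto
next
  case False
  define n where "n = (LEAST n. n \<ge> 1 \<and> c n \<noteq> c' n)"
  have n: "n \<ge> 1" "c n \<noteq> c' n"
    using False LeastI_ex[of "\<lambda>n. n \<ge> 1 \<and> c n \<noteq> c' n"] by (auto simp: n_def)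
  have agree: "c k = c' k" if "1 \<le> k" "k < n" for k
    using not_less_Least[of k "\<lambda>n. n \<ge> 1 \<and> c n \<noteq> c' n"] that by (auto simp: n_def)
  show ?thesis
  proof (cases "c n < c' n")
    case True
    then show ?thesis
      using DeltaQ_eq_transfer_first_difference[OF Q P c c' n(1) agree _ eq] by blast
  next
    case False
    with n have "c' n < c n"
      by simp
    then show ?thesis
      using DeltaQ_eq_transfer_first_difference[OF Q P c' c n(1) _ _ eq[symmetric]] agree by fastforce
  qed
qed

lemma tidx_tidx: "i \<le> m n \<Longrightarrow> tidx m (tidx m i n) n = i"
  by (simp add: tidx_def)

lemma valid_digits_tidx: "valid_digits m d \<Longrightarrow> valid_digits m (\<lambda>n. tidx m (d n) n)"
  by (simp add: valid_digits_def tidx_def)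

lemma Fdig_eq_DeltaQ: "Fdig m p d = DeltaQ p (\<lambda>n. tidx m (d n) n)"
proof -
  have "tidx m (d 1) 1 = d 1"
    by (simp add: tidx_def)
  then show ?thesis
    unfolding Fdig_def DeltaQ_def by simp
qed

lemma Ffun_eq_DeltaQ:
  assumes Q: "positive_digit_weights m q" and P: "digit_weights m p"
    and c: "valid_digits m c" and x: "DeltaQ q c = x"
  shows "Ffun m q p x = DeltaQ p c"
proof -
  have "nega_rep m q x (\<lambda>n. tidx m (c n) n)"
    unfolding nega_rep_def
  proof
    show "valid_digits m (\<lambda>n. tidx m (c n) n)"
      using c by (rule valid_digits_tidx)
    show "x = DeltaQ q (\<lambda>n. tidx m (tidx m (c n) n) n)"
      using c x by (auto simp: tidx_tidx valid_digits_def intro!: DeltaQ_cong)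
  qed
  then have "nega_rep m q x (SOME d. nega_rep m q x d)"
    by (rule someI[where P = "nega_rep m q x"])
  then obtain d where d: "valid_digits m d" "x = DeltaQ q (\<lambda>n. tidx m (d n) n)"
    and F: "Ffun m q p x = Fdig m p d"
    unfolding nega_rep_def Ffun_def by blast
  have "Ffun m q p x = DeltaQ p (\<lambda>n. tidx m (d n) n)"
    using F by (simp add: Fdig_eq_DeltaQ)
  also have "\<dots> = DeltaQ p c"
    using DeltaQ_eq_transfer[OF Q P valid_digits_tidx[OF d(1)] c] d(2) x by simp
  finally show ?thesis .
qed

lemma graph_Ffun_eq_image:
  assumes Q: "positive_digit_weights m q" and P: "digit_weights m p"
  shows "(\<lambda>x. (x, Ffun m q p x)) ` {0..1} = (\<lambda>c. (DeltaQ q c, DeltaQ p c)) ` digit_space m"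
proof -
  interpret Q: positive_digit_weights m q
    by (rule Q)
  have "(x, Ffun m q p x) \<in> (\<lambda>c. (DeltaQ q c, DeltaQ p c)) ` digit_space m" if "0 \<le> x" "x \<le> 1" for x
  proof
    let ?c = "greedy_digits m q x"
    show "?c \<in> digit_space m"
      using Q.greedy_digits_in_digit_space[OF that] .
    then show "(x, Ffun m q p x) = (DeltaQ q ?c, DeltaQ p ?c)"
      using Ffun_eq_DeltaQ[OF Q P] Q.DeltaQ_greedy_digits[OF that] digit_space_valid_digits by simp
  qed
  moreover have "(DeltaQ q c, DeltaQ p c) \<in> (\<lambda>x. (x, Ffun m q p x)) ` {0..1}" if "c \<in> digit_space m" for c
    using Ffun_eq_DeltaQ[OF Q P] Q.DeltaQ_bounds digit_space_valid_digits[OF that]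
    by (simp add: image_iff)
  ultimately show ?thesis
    by auto
qed

lemma positive_digit_weightsI:
  assumes pos: "\<And>n i. n \<ge> 1 \<Longrightarrow> i \<le> m n \<Longrightarrow> w i n > 0"
    and sum: "\<And>n. n \<ge> 1 \<Longrightarrow> (\<Sum>i\<le>m n. w i n) = 1"
    and prod: "\<And>d. valid_digits m d \<Longrightarrow> (\<lambda>N. \<Prod>n\<in>{1..N}. w (d n) n) \<longlonglongrightarrow> 0"
  shows "positive_digit_weights m w"
proof unfold_locales
  show "cyl_len w c \<longlonglongrightarrow> 0" if "valid_digits m c" for c
    using prod[OF that] by (simp add: cyl_len_def[abs_def])
  fix n c
  assume n: "n \<ge> 1" and "c \<le> Suc (m n)"
  then have "{..<c} \<subseteq> {..m n}"
    by auto
  then have "0 \<le> avals w c n" "avals w c n \<le> (\<Sum>i\<le>m n. w i n)"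
    unfolding avals_def using pos[OF n] by (auto intro!: sum_nonneg sum_mono2 intro: less_imp_le)
  then show "0 \<le> avals w c n \<and> avals w c n \<le> 1"
    using sum[OF n] by simp
qed (use sum pos in auto)

lemma digit_weightsI:
  assumes sum: "\<And>n. n \<ge> 1 \<Longrightarrow> (\<Sum>i\<le>m n. w i n) = 1"
    and prod: "\<And>d. valid_digits m d \<Longrightarrow> (\<lambda>N. \<Prod>n\<in>{1..N}. \<bar>w (d n) n\<bar>) \<longlonglongrightarrow> 0"
    and partial: "\<And>n c. n \<ge> 1 \<Longrightarrow> 1 \<le> c \<Longrightarrow> c \<le> m n \<Longrightarrow> 0 < (\<Sum>i<c. w i n) \<and> (\<Sum>i<c. w i n) < 1"
  shows "digit_weights m w"
proof unfold_locales
  show "cyl_len w c \<longlonglongrightarrow> 0" if "valid_digits m c" for c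
    using prod[OF that] tendsto_rabs_zero_iff[of "cyl_len w c"] by (simp add: cyl_len_def abs_prod)
  fix n c
  assume n: "n \<ge> 1" and "c \<le> Suc (m n)"
  then consider "c = 0" | "c = Suc (m n)" | "1 \<le> c" "c \<le> m n"
    by linarith
  then show "0 \<le> avals w c n \<and> avals w c n \<le> 1"
    using sum[OF n] partial[OF n, of c] by cases (auto simp: avals_def lessThan_Suc_atMost)
qed (use sum in auto)

theorem mainTheorem3:
  fixes m :: "nat \<Rightarrow> nat" and q p :: "nat \<Rightarrow> nat \<Rightarrow> real"
  assumes q_pos: "\<And>n i. n \<ge> 1 \<Longrightarrow> i \<le> m n \<Longrightarrow> q i n > 0"
    and q_sum: "\<And>n. n \<ge> 1 \<Longrightarrow> (\<Sum>i\<le>m n. q i n) = 1"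
    and q_prod: "\<And>d. valid_digits m d \<Longrightarrow> (\<lambda>N. \<Prod>n\<in>{1..N}. q (d n) n) \<longlonglongrightarrow> 0"
    and p_bnd: "\<And>n i. n \<ge> 1 \<Longrightarrow> i \<le> m n \<Longrightarrow> -1 < p i n \<and> p i n < 1"
    and p_sum: "\<And>n. n \<ge> 1 \<Longrightarrow> (\<Sum>i\<le>m n. p i n) = 1"
    and p_prod: "\<And>d. valid_digits m d \<Longrightarrow> (\<lambda>N. \<Prod>n\<in>{1..N}. \<bar>p (d n) n\<bar>) \<longlonglongrightarrow> 0"
    and p_partial: "\<And>n c. n \<ge> 1 \<Longrightarrow> 1 \<le> c \<Longrightarrow> c \<le> m n \<Longrightarrow>
                       0 < (\<Sum>i<c. p i n) \<and> (\<Sum>i<c. p i n) < 1"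
  shows "continuous_on {0..1} (Ffun m q p)"
proof -
  have Q: "positive_digit_weights m q"
    using q_pos q_sum q_prod by (rule positive_digit_weightsI)
  have P: "digit_weights m p"
    using p_sum p_prod p_partial by (rule digit_weightsI)
  interpret Q: positive_digit_weights m q by (rule Q)
  interpret P: digit_weights m p by (rule P)
  let ?graph = "(\<lambda>x. (x, Ffun m q p x)) ` {0..1}"
  have graph: "?graph = (\<lambda>c. (DeltaQ q c, DeltaQ p c)) ` digit_space m"
    by (rule graph_Ffun_eq_image[OF Q P])
  moreover have "compact ((\<lambda>c. (DeltaQ q c, DeltaQ p c)) ` digit_space m)"
    using compact_digit_space
    by (intro compact_continuous_image continuous_on_Pair Q.continuous_on_DeltaQ P.continuous_on_DeltaQ)
  ultimately have "closed ?graph"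
    by (simp add: compact_imp_closed)
  moreover have "Ffun m q p x \<in> {0..1}" if "x \<in> {0..1}" for x
  proof -
    from that have "(x, Ffun m q p x) \<in> (\<lambda>c. (DeltaQ q c, DeltaQ p c)) ` digit_space m"
      using graph by blast
    then obtain c where "c \<in> digit_space m" "Ffun m q p x = DeltaQ p c"
      by auto
    then show ?thesis
      using P.DeltaQ_bounds digit_space_valid_digits by simp
  qed
  ultimately show ?thesis
    by (intro continuous_from_closed_graph[of "{0..1}"]) auto
qed

end
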